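(* Let $\Omega\subset\mathbb{R}^n$ be a non-empty, bounded, connected, open set with closure $\overline{\Omega}$. Let $J\in C(\overline{\Omega}\times\overline{\Omega})$, let $S\in C^\infty(\mathbb{R})$ have bounded $k$th derivative for every $k\in\{0,1,2,\dots\}$, and let $\tau\in C(\overline{\Omega}\times\overline{\Omega})$ be non-negative and not identically zero. Put $h:=\sup_{\overline{\Omega}\times\overline{\Omega}}\tau$, $Y:=C(\overline{\Omega})$ and $X:=C([-h,0];Y)$ (supremum norms), and define $G:X\to Y$ by $G(\phi)(\mathbf{r})=\int_{\overline{\Omega}}J(\mathbf{r},\mathbf{r}')S(\phi(-\tau(\mathbf{r},\mathbf{r}'),\mathbf{r}'))\,d\mathbf{r}'$. Then $G\in C^\infty(X,Y)$, and for $k=1,2,\dots$ its $k$th Fréchet derivative $D^kG(\phi)\in\mathcal{L}_k(X,Y)$ at $\phi\in X$ is given by $$\big(D^kG(\phi)(\psi_1,\dots,\psi_k)\big)(\mathbf{r})=\int_{\overline{\Omega}}J(\mathbf{r},\mathbf{r}')\,S^{(k)}\big(\phi(-\tau(\mathbf{r},\mathbf{r}'),\mathbf{r}')\big)\prod_{i=1}^k\psi_i(-\tau(\mathbf{r},\mathbf{r}'),\mathbf{r}')\,d\mathbf{r}'$$ for all $\psi_1,\dots,\psi_k\in X$ and $\mathbf{r}\in\overline{\Omega}$.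
   Context: For $\phi\in X$ write $\phi(t,\mathbf{r}):=\phi(t)(\mathbf{r})$. $\mathcal{L}_k(X,Y)$ denotes the space of bounded $k$-linear operators from $X$ to $Y$. *)

theory Defs
  imports "HOL-Analysis.Analysis"
begin

text \<open>
  K is the compact set closure Omega, h the maximal delay.
  An element of Y = C(K) is represented by a function f :: 'a => real, continuous on K
  (values outside K are irrelevant).  An element of X = C([-h,0]; Y) is represented by
  phi :: real => 'a => real, where phi t r stands for phi(t)(r).
  A k-linear operator X^k -> Y is represented by a map sending a family
  psi :: nat => (real => 'a => real) (only psi 0, ..., psi (k-1) matter) to an element of Y.
\<close>

definition supY :: "'a set \<Rightarrow> ('a \<Rightarrow> real) \<Rightarrow> real" where
  "supY K f = Sup ((\<lambda>r. \<bar>f r\<bar>) ` K)"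

definition inY :: "'a::topological_space set \<Rightarrow> ('a \<Rightarrow> real) \<Rightarrow> bool" where
  "inY K f \<longleftrightarrow> continuous_on K f"

definition inX :: "real \<Rightarrow> 'a::topological_space set \<Rightarrow> (real \<Rightarrow> 'a \<Rightarrow> real) \<Rightarrow> bool" where
  "inX h K phi \<longleftrightarrow>
     (\<forall>t\<in>{-h..0}. inY K (phi t)) \<and>
     (\<forall>t\<in>{-h..0}. \<forall>e>0. \<exists>d>0. \<forall>s\<in>{-h..0}. \<bar>s - t\<bar> < d \<longrightarrow>
         supY K (\<lambda>r. phi s r - phi t r) < e)"

definition normX :: "real \<Rightarrow> 'a set \<Rightarrow> (real \<Rightarrow> 'a \<Rightarrow> real) \<Rightarrow> real" where
  "normX h K phi = Sup ((\<lambda>t. supY K (phi t)) ` {-h..0})"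

definition bounded_klinear ::
  "real \<Rightarrow> 'a::topological_space set \<Rightarrow> nat \<Rightarrow> ((nat \<Rightarrow> real \<Rightarrow> 'a \<Rightarrow> real) \<Rightarrow> 'a \<Rightarrow> real) \<Rightarrow> bool" where
  "bounded_klinear h K k L \<longleftrightarrow>
     (\<forall>psi. (\<forall>i<k. inX h K (psi i)) \<longrightarrow> inY K (L psi)) \<and>
     (\<forall>psi j a b u v. (\<forall>i<k. inX h K (psi i)) \<and> j < k \<and> inX h K u \<and> inX h K v \<longrightarrow>
         (\<forall>r\<in>K. L (psi(j := (\<lambda>t x. a * u t x + b * v t x))) r
                  = a * L (psi(j := u)) r + b * L (psi(j := v)) r)) \<and>
     (\<exists>C. \<forall>psi. (\<forall>i<k. inX h K (psi i)) \<longrightarrow>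
         supY K (L psi) \<le> C * (\<Prod>i<k. normX h K (psi i)))"

text \<open>A must be a bounded linear map into L_k(X,Y) (i.e. a bounded (k+1)-linear operator
  after uncurrying, with the new argument in front), and the remainder must be
  o(norm eta) in the operator norm of L_k(X,Y).\<close>
definition frechet_deriv_Lk ::
  "real \<Rightarrow> 'a::topological_space set \<Rightarrow> nat
   \<Rightarrow> ((real \<Rightarrow> 'a \<Rightarrow> real) \<Rightarrow> (nat \<Rightarrow> real \<Rightarrow> 'a \<Rightarrow> real) \<Rightarrow> 'a \<Rightarrow> real)
   \<Rightarrow> ((real \<Rightarrow> 'a \<Rightarrow> real) \<Rightarrow> (nat \<Rightarrow> real \<Rightarrow> 'a \<Rightarrow> real) \<Rightarrow> 'a \<Rightarrow> real)
   \<Rightarrow> (real \<Rightarrow> 'a \<Rightarrow> real) \<Rightarrow> bool" where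
  "frechet_deriv_Lk h K k F A phi \<longleftrightarrow>
     bounded_klinear h K (Suc k) (\<lambda>psi. A (psi 0) (\<lambda>i. psi (Suc i))) \<and>
     (\<forall>e>0. \<exists>d>0. \<forall>eta. inX h K eta \<and> normX h K eta < d \<longrightarrow>
        (\<forall>psi. (\<forall>i<k. inX h K (psi i)) \<longrightarrow>
           supY K (\<lambda>r. F (\<lambda>t x. phi t x + eta t x) psi r - F phi psi r - A eta psi r)
             \<le> e * normX h K eta * (\<Prod>i<k. normX h K (psi i))))"

definition DG ::
  "'a::euclidean_space set \<Rightarrow> ('a \<Rightarrow> 'a \<Rightarrow> real) \<Rightarrow> (real \<Rightarrow> real) \<Rightarrow> ('a \<Rightarrow> 'a \<Rightarrow> real)
   \<Rightarrow> nat \<Rightarrow> (real \<Rightarrow> 'a \<Rightarrow> real) \<Rightarrow> (nat \<Rightarrow> real \<Rightarrow> 'a \<Rightarrow> real) \<Rightarrow> 'a \<Rightarrow> real" where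
  "DG K J S tau k phi psi r =
     integral K (\<lambda>r'. J r r' * (deriv ^^ k) S (phi (- tau r r') r')
                       * (\<Prod>i<k. psi i (- tau r r') r'))"

end

theory Submission
  imports Defs
begin

text \<open>
  Every candidate derivative is an integral over K of a continuous kernel, so it is continuous
  in r, and it is bounded k-linear because J and the derivatives of S are bounded while
  each \<open>\<psi>\<^sub>i(-\<tau>(r,r'), r')\<close> is bounded by the norm of \<open>\<psi>\<^sub>i\<close>.  For differentiability, Taylor's
  theorem with the bound on \<open>S\<^sup>(\<^sup>k\<^sup>+\<^sup>2\<^sup>)\<close> bounds the integrand of the remainder
  \<open>D\<^sup>kG(\<phi>+\<eta>) - D\<^sup>kG(\<phi>) - D\<^sup>k\<^sup>+\<^sup>1G(\<phi>)(\<eta>,\<dots>)\<close> by a constant times \<open>\<parallel>\<eta>\<parallel>\<^sup>2 \<Prod>\<^sub>i \<parallel>\<psi>\<^sub>i\<parallel>\<close>,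
  so the remainder is even \<open>O(\<parallel>\<eta>\<parallel>\<^sup>2)\<close>.
\<close>

lemma abs_le_supY:
  fixes f :: "'a::metric_space \<Rightarrow> real"
  assumes "compact K" "continuous_on K f" "x \<in> K"
  shows "\<bar>f x\<bar> \<le> supY K f"
  unfolding supY_def
proof (rule cSup_upper)
  show "\<bar>f x\<bar> \<in> (\<lambda>r. \<bar>f r\<bar>) ` K" using assms by auto
  have "compact ((\<lambda>r. \<bar>f r\<bar>) ` K)"
    by (intro compact_continuous_image continuous_intros assms)
  then show "bdd_above ((\<lambda>r. \<bar>f r\<bar>) ` K)"
    by (intro bounded_imp_bdd_above compact_imp_bounded)
qed

lemma supY_le:
  assumes "K \<noteq> {}" "\<And>x. x \<in> K \<Longrightarrow> \<bar>f x\<bar> \<le> B"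
  shows "supY K f \<le> B"
  unfolding supY_def using assms by (auto intro!: cSup_least)

definition jointly_continuous :: "real \<Rightarrow> 'a::topological_space set \<Rightarrow> (real \<Rightarrow> 'a \<Rightarrow> real) \<Rightarrow> bool"
  where "jointly_continuous h K f \<longleftrightarrow> continuous_on ({-h..0} \<times> K) (\<lambda>(t, x). f t x)"

lemma jointly_continuous_add:
  "jointly_continuous h K f \<Longrightarrow> jointly_continuous h K g \<Longrightarrow>
     jointly_continuous h K (\<lambda>t x. f t x + g t x)"
  unfolding jointly_continuous_def by (auto simp: split_beta intro: continuous_on_add)

lemma inX_imp_jointly_continuous:
  fixes K :: "'a::metric_space set"
  assumes K: "compact K" and X: "inX h K phi"
  shows "jointly_continuous h K phi"
  unfolding jointly_continuous_def continuous_on_iff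
proof (intro ballI allI impI)
  fix z e assume z: "z \<in> {-h..0} \<times> K" and e: "(0::real) < e"
  obtain t0 x0 where z0: "z = (t0, x0)" "t0 \<in> {-h..0}" "x0 \<in> K" using z by auto
  from X z0 e obtain d1 where d1: "d1 > 0" "\<forall>s\<in>{-h..0}. \<bar>s - t0\<bar> < d1 \<longrightarrow>
         supY K (\<lambda>r. phi s r - phi t0 r) < e/2"
    unfolding inX_def by (meson half_gt_zero)
  have c0: "continuous_on K (phi t0)" using X z0 by (auto simp: inX_def inY_def)
  then obtain d2 where d2: "d2 > 0" "\<forall>x\<in>K. dist x x0 < d2 \<longrightarrow> dist (phi t0 x) (phi t0 x0) < e/2"
    using z0 e unfolding continuous_on_iff by (meson half_gt_zero)
  show "\<exists>d>0. \<forall>z'\<in>{-h..0} \<times> K. dist z' z < d \<longrightarrow>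
          dist ((\<lambda>(t, x). phi t x) z') ((\<lambda>(t, x). phi t x) z) < e"
  proof (intro exI[of _ "min d1 d2"] conjI ballI impI)
    show "min d1 d2 > 0" using d1 d2 by simp
    fix z' assume z': "z' \<in> {-h..0} \<times> K" and dz: "dist z' z < min d1 d2"
    obtain s x where zs: "z' = (s, x)" "s \<in> {-h..0}" "x \<in> K" using z' by auto
    have "\<bar>s - t0\<bar> < d1" using dist_fst_le[of z' z] dz zs z0 by (simp add: dist_real_def)
    with d1 zs have s1: "supY K (\<lambda>r. phi s r - phi t0 r) < e/2" by auto
    have "continuous_on K (phi s)" using X zs by (auto simp: inX_def inY_def)
    then have "\<bar>phi s x - phi t0 x\<bar> \<le> supY K (\<lambda>r. phi s r - phi t0 r)"
      using abs_le_supY[OF K _ zs(3), of "\<lambda>r. phi s r - phi t0 r"] c0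
      by (auto intro: continuous_intros)
    moreover have "dist x x0 < d2" using dist_snd_le[of z' z] dz zs z0 by simp
    then have "\<bar>phi t0 x - phi t0 x0\<bar> < e/2" using d2 zs by (auto simp: dist_real_def)
    ultimately have "\<bar>phi s x - phi t0 x0\<bar> < e" using s1 by linarith
    then show "dist ((\<lambda>(t, x). phi t x) z') ((\<lambda>(t, x). phi t x) z) < e"
      using zs z0 by (simp add: dist_real_def)
  qed
qed

lemma abs_le_normX:
  fixes K :: "'a::metric_space set"
  assumes K: "compact K" and X: "inX h K phi" and t: "t \<in> {-h..0}" and x: "x \<in> K"
  shows "\<bar>phi t x\<bar> \<le> normX h K phi"
proof -
  have "compact ((\<lambda>z. \<bar>(\<lambda>(t, x). phi t x) z\<bar>) ` ({-h..0} \<times> K))"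
    using inX_imp_jointly_continuous[OF K X] K unfolding jointly_continuous_def
    by (intro compact_continuous_image continuous_on_rabs compact_Times compact_Icc)
  then obtain M where M0: "\<forall>y \<in> (\<lambda>z. \<bar>(\<lambda>(t, x). phi t x) z\<bar>) ` ({-h..0} \<times> K). y \<le> M"
    using compact_imp_bounded bounded_imp_bdd_above unfolding bdd_above_def by blast
  have M: "\<bar>phi s y\<bar> \<le> M" if "s \<in> {-h..0}" "y \<in> K" for s y
    using M0[rule_format, OF image_eqI[where x = "(s, y)"]] that by simp
  have "\<bar>phi t x\<bar> \<le> supY K (phi t)"
    using X t unfolding inX_def inY_def by (intro abs_le_supY[OF K _ x]) blast
  also have "supY K (phi t) \<le> normX h K phi"
    unfolding normX_def
  proof (rule cSup_upper)
    have "supY K (phi s) \<le> M" if "s \<in> {-h..0}" for s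
      using x M[OF that] by (intro supY_le) auto
    then show "bdd_above ((\<lambda>t. supY K (phi t)) ` {-h..0})"
      by (intro bdd_aboveI2)
  qed (use t in simp)
  finally show ?thesis .
qed

lemma normX_nonneg:
  fixes K :: "'a::metric_space set"
  assumes "compact K" "K \<noteq> {}" "0 \<le> h" "inX h K phi"
  shows "0 \<le> normX h K phi"
proof -
  obtain x where "x \<in> K" using assms(2) by auto
  then show ?thesis using abs_le_normX[OF assms(1,4), of 0 x] assms(3) by auto
qed

lemma abs_prod_le_prod_normX:
  fixes K :: "'a::metric_space set"
  assumes "compact K" "\<forall>i<m. inX h K (psi i)" "t \<in> {-h..0}" "x \<in> K"
  shows "\<bar>\<Prod>i<m. psi i t x\<bar> \<le> (\<Prod>i<m. normX h K (psi i))"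
  unfolding abs_prod by (rule prod_mono) (use assms in \<open>auto intro: abs_le_normX\<close>)

lemma prod_lessThan_fun_upd:
  fixes psi :: "nat \<Rightarrow> 'b \<Rightarrow> 'c \<Rightarrow> 'd::comm_monoid_mult"
  assumes "j < m"
  shows "(\<Prod>i<m. (psi(j := w)) i t x) = w t x * (\<Prod>i\<in>{..<m}-{j}. psi i t x)"
proof -
  have "(\<Prod>i<m. (psi(j := w)) i t x) = (psi(j := w)) j t x * (\<Prod>i\<in>{..<m}-{j}. (psi(j := w)) i t x)"
    by (rule prod.remove) (use assms in auto)
  also have "(\<Prod>i\<in>{..<m}-{j}. (psi(j := w)) i t x) = (\<Prod>i\<in>{..<m}-{j}. psi i t x)"
    by (rule prod.cong) auto
  finally show ?thesis by simp
qed

lemma integrable_on_compact: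
  fixes f :: "'a::euclidean_space \<Rightarrow> real"
  assumes "compact K" "continuous_on K f"
  shows "f integrable_on K"
proof -
  have "(\<lambda>x. indicator K x *\<^sub>R f x) integrable_on UNIV"
    by (intro integrable_on_lborel borel_integrable_compact assms)
  moreover have "(\<lambda>x. indicator K x *\<^sub>R f x) = (\<lambda>x. if x \<in> K then f x else 0)"
    by (auto simp: indicator_def)
  ultimately show ?thesis using integrable_restrict_UNIV by metis
qed

lemma abs_integral_le_measure:
  fixes f :: "'a::euclidean_space \<Rightarrow> real"
  assumes "compact K" "f integrable_on K" "\<And>x. x \<in> K \<Longrightarrow> \<bar>f x\<bar> \<le> B"
  shows "\<bar>integral K f\<bar> \<le> B * measure lebesgue K"
proof -
  have "norm (integral K f) \<le> integral K (\<lambda>x. B)"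
    using assms(3) by (intro integral_norm_bound_integral[OF assms(2)]
        integrable_on_compact[OF assms(1) continuous_on_const]) simp
  also have "\<dots> = B * measure lebesgue K"
    using lmeasure_integral[OF lmeasurable_compact[OF assms(1)]] integral_mult_right[of K B "\<lambda>x. 1"]
    by simp
  finally show ?thesis by simp
qed

lemma continuous_on_integral_param_compact:
  fixes f :: "'b::topological_space \<Rightarrow> 'a::euclidean_space \<Rightarrow> real"
  assumes K: "compact K" and f: "continuous_on (U \<times> K) (\<lambda>(x, y). f x y)"
  shows "continuous_on U (\<lambda>x. integral K (f x))"
  unfolding continuous_on_def
proof (intro ballI tendstoI)
  fix x and e :: real assume x: "x \<in> U" and e: "0 < e"
  define e' where "e' = e / (measure lebesgue K + 1)"
  have e': "0 < e'" using e by (simp add: e'_def add_nonneg_pos)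
  obtain X0 where X0: "x \<in> X0" "open X0"
    and near: "\<forall>y\<in>X0 \<inter> U. \<forall>t\<in>K. dist (f y t) (f x t) \<le> e'"
    using continuous_on_prod_compactE[OF f K x e'] unfolding split_beta fst_conv snd_conv by metis
  have int: "f y integrable_on K" if "y \<in> U" for y
  proof (rule integrable_on_compact[OF K])
    have "continuous_on K (\<lambda>t. (\<lambda>(x, y). f x y) (y, t))"
      by (rule continuous_on_compose2[OF f]) (use that in \<open>auto intro!: continuous_intros\<close>)
    then show "continuous_on K (f y)" by simp
  qed
  have "\<forall>\<^sub>F y in at x within U. y \<in> X0 \<inter> U"
    using X0 eventually_at_topological by auto
  then show "\<forall>\<^sub>F y in at x within U. dist (integral K (f y)) (integral K (f x)) < e"
  proof eventually_elim
    case (elim y)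
    then have "dist (integral K (f y)) (integral K (f x)) = \<bar>integral K (\<lambda>t. f y t - f x t)\<bar>"
      using x int by (simp add: integral_diff dist_real_def)
    also have "\<dots> \<le> e' * measure lebesgue K"
    proof (rule abs_integral_le_measure[OF K])
      show "(\<lambda>t. f y t - f x t) integrable_on K" using elim x int by (simp add: integrable_diff)
      show "\<bar>f y t - f x t\<bar> \<le> e'" if "t \<in> K" for t
        using near elim that by (simp add: dist_real_def)
    qed
    also have "\<dots> < e"
      using e by (simp add: e'_def pos_divide_less_eq add_nonneg_pos)
    finally show ?case .
  qed
qed

lemma taylor_quadratic_remainder:
  fixes D :: "nat \<Rightarrow> real \<Rightarrow> real"
  assumes deriv: "\<And>m x. (D m has_real_derivative D (Suc m) x) (at x)"
    and bound: "\<And>x. \<bar>D (Suc (Suc k)) x\<bar> \<le> B"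
  shows "\<bar>D k (p + q) - D k p - D (Suc k) p * q\<bar> \<le> B / 2 * q\<^sup>2"
proof -
  have "\<forall>m t. ((\<lambda>t. D (k + m) (t + p)) has_real_derivative D (k + Suc m) (t + p)) (at t)"
    using deriv by (simp flip: DERIV_shift)
  then obtain t where t: "D k (q + p) =
      (\<Sum>m<2. D (k + m) (0 + p) / fact m * q ^ m) + D (k + 2) (t + p) / fact 2 * q ^ 2"
    using Maclaurin_all_le[where diff = "\<lambda>m t. D (k + m) (t + p)" and n = 2 and x = q] by auto
  have "D k (p + q) - D k p - D (Suc k) p * q = D (Suc (Suc k)) (t + p) / 2 * q\<^sup>2"
    using t by (simp add: numeral_2_eq_2 add.commute)
  also have "\<bar>\<dots>\<bar> \<le> B / 2 * q\<^sup>2"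
    using bound[of "t + p"] by (simp add: abs_mult divide_right_mono mult_right_mono)
  finally show ?thesis .
qed

locale delayed_integral_operator =
  fixes K :: "'a::euclidean_space set" and J tau :: "'a \<Rightarrow> 'a \<Rightarrow> real"
    and S :: "real \<Rightarrow> real" and h :: real
  assumes compact_K: "compact K" and K_nonempty: "K \<noteq> {}"
    and continuous_J: "continuous_on (K \<times> K) (\<lambda>(r, r'). J r r')"
    and continuous_tau: "continuous_on (K \<times> K) (\<lambda>(r, r'). tau r r')"
    and tau_nonneg: "\<forall>r\<in>K. \<forall>r'\<in>K. 0 \<le> tau r r'"
    and tau_le: "\<forall>r\<in>K. \<forall>r'\<in>K. tau r r' \<le> h"
    and differentiable_S: "\<forall>k x. ((deriv ^^ k) S) differentiable (at x)"
    and bounded_S: "\<forall>k. \<exists>B. \<forall>x. \<bar>(deriv ^^ k) S x\<bar> \<le> B"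
begin

definition integrand :: "(real \<Rightarrow> 'a \<Rightarrow> real) \<Rightarrow> nat \<Rightarrow> (nat \<Rightarrow> real \<Rightarrow> 'a \<Rightarrow> real) \<Rightarrow> 'a \<Rightarrow> 'a \<Rightarrow> real"
  where "integrand phi m psi r r' =
    J r r' * (deriv ^^ m) S (phi (- tau r r') r') * (\<Prod>i<m. psi i (- tau r r') r')"

lemma DG_eq_integral: "DG K J S tau m phi psi r = integral K (integrand phi m psi r)"
  unfolding DG_def integrand_def ..

lemma h_nonneg: "0 \<le> h"
  using K_nonempty tau_nonneg tau_le by fastforce

lemma minus_tau_in_delays: "r \<in> K \<Longrightarrow> r' \<in> K \<Longrightarrow> - tau r r' \<in> {-h..0}"
  using tau_nonneg tau_le by auto

lemma has_real_derivative_deriv_S: "((deriv ^^ m) S has_real_derivative (deriv ^^ Suc m) S x) (at x)"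
  using differentiable_S DERIV_deriv_iff_real_differentiable by simp

lemma continuous_on_deriv_S: "continuous_on A ((deriv ^^ m) S)"
  using differentiable_S
  by (intro differentiable_imp_continuous_on differentiable_at_imp_differentiable_on) auto

lemma inX_jointly_continuous: "inX h K f \<Longrightarrow> jointly_continuous h K f"
  using inX_imp_jointly_continuous[OF compact_K] .

lemma bounded_J:
  obtains MJ where "0 \<le> MJ" "\<And>r r'. r \<in> K \<Longrightarrow> r' \<in> K \<Longrightarrow> \<bar>J r r'\<bar> \<le> MJ"
proof -
  have "compact ((\<lambda>z. \<bar>(\<lambda>(r, r'). J r r') z\<bar>) ` (K \<times> K))"
    using compact_K by (intro compact_continuous_image continuous_intros continuous_J compact_Times)
  then obtain MJ where MJ0: "\<forall>y \<in> (\<lambda>z. \<bar>(\<lambda>(r, r'). J r r') z\<bar>) ` (K \<times> K). y \<le> MJ"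
    using compact_imp_bounded bounded_imp_bdd_above unfolding bdd_above_def by blast
  have MJ: "\<bar>J r r'\<bar> \<le> MJ" if "r \<in> K" "r' \<in> K" for r r'
    using MJ0[rule_format, OF image_eqI[where x = "(r, r')"]] that by simp
  moreover have "0 \<le> MJ" using K_nonempty MJ by (meson abs_ge_zero all_not_in_conv order_trans)
  ultimately show ?thesis using that by blast
qed

lemma bounded_deriv_S:
  obtains B where "0 \<le> B" "\<And>x. \<bar>(deriv ^^ m) S x\<bar> \<le> B"
  using bounded_S by (meson abs_ge_zero order_trans)

lemma continuous_on_delayed:
  assumes "jointly_continuous h K f"
  shows "continuous_on (K \<times> K) (\<lambda>(r, r'). f (- tau r r') r')"
proof -
  have "continuous_on (K \<times> K) (\<lambda>z. (\<lambda>(t, x). f t x) (- tau (fst z) (snd z), snd z))"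
    by (rule continuous_on_compose2[OF assms[unfolded jointly_continuous_def]])
       (use continuous_tau minus_tau_in_delays in \<open>auto simp: split_beta intro!: continuous_intros\<close>)
  then show ?thesis by (simp add: split_beta)
qed

lemma continuous_on_integrand:
  assumes "jointly_continuous h K phi" "\<forall>i<m. jointly_continuous h K (psi i)"
  shows "continuous_on (K \<times> K) (\<lambda>(r, r'). integrand phi m psi r r')"
proof -
  have "continuous_on (K \<times> K) (\<lambda>z. (deriv ^^ m) S ((\<lambda>(r, r'). phi (- tau r r') r') z))"
    by (rule continuous_on_compose2[OF continuous_on_deriv_S[of UNIV m] continuous_on_delayed[OF assms(1)]])
       simp
  moreover have "continuous_on (K \<times> K) (\<lambda>z. \<Prod>i<m. (\<lambda>(r, r'). psi i (- tau r r') r') z)"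
    using continuous_on_delayed assms(2) by (intro continuous_on_prod) auto
  ultimately show ?thesis
    using continuous_J unfolding integrand_def split_beta by (intro continuous_on_mult)
qed

lemma integrable_integrand:
  assumes "jointly_continuous h K phi" "\<forall>i<m. jointly_continuous h K (psi i)" "r \<in> K"
  shows "integrand phi m psi r integrable_on K"
proof (rule integrable_on_compact[OF compact_K])
  have "continuous_on K (\<lambda>r'. (\<lambda>(r, r'). integrand phi m psi r r') (r, r'))"
    by (rule continuous_on_compose2[OF continuous_on_integrand[OF assms(1,2)]])
       (use assms(3) in \<open>auto intro!: continuous_intros\<close>)
  then show "continuous_on K (integrand phi m psi r)" by simp
qed

lemma continuous_on_DG:
  assumes "jointly_continuous h K phi" "\<forall>i<m. jointly_continuous h K (psi i)"
  shows "continuous_on K (DG K J S tau m phi psi)"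
  unfolding DG_eq_integral[abs_def]
  by (rule continuous_on_integral_param_compact[OF compact_K continuous_on_integrand[OF assms]])

lemma DG_fun_upd_linear:
  assumes phi: "jointly_continuous h K phi" and psi: "\<forall>i<m. jointly_continuous h K (psi i)"
    and j: "j < m" and u: "jointly_continuous h K u" and v: "jointly_continuous h K v"
    and r: "r \<in> K"
  shows "DG K J S tau m phi (psi(j := (\<lambda>t x. a * u t x + b * v t x))) r
           = a * DG K J S tau m phi (psi(j := u)) r + b * DG K J S tau m phi (psi(j := v)) r"
proof -
  have "integrand phi m (psi(j := (\<lambda>t x. a * u t x + b * v t x))) r
          = (\<lambda>r'. a * integrand phi m (psi(j := u)) r r' + b * integrand phi m (psi(j := v)) r r')"
    unfolding integrand_def prod_lessThan_fun_upd[OF j] by (simp add: algebra_simps)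
  moreover have "\<forall>i<m. jointly_continuous h K ((psi(j := w)) i)"
    if "jointly_continuous h K w" for w
    using psi that by simp
  ultimately show ?thesis
    unfolding DG_eq_integral
    by (simp add: integral_add integrable_on_mult_right integrable_integrand phi u v r)
qed

lemma supY_DG_le:
  assumes MJ: "0 \<le> MJ" "\<And>r r'. r \<in> K \<Longrightarrow> r' \<in> K \<Longrightarrow> \<bar>J r r'\<bar> \<le> MJ"
    and B: "0 \<le> B" "\<And>x. \<bar>(deriv ^^ m) S x\<bar> \<le> B"
    and phi: "jointly_continuous h K phi" and psi: "\<forall>i<m. inX h K (psi i)"
  shows "supY K (DG K J S tau m phi psi) \<le> MJ * B * measure lebesgue K * (\<Prod>i<m. normX h K (psi i))"
proof (rule supY_le[OF K_nonempty])
  fix r assume r: "r \<in> K"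
  have "\<bar>integrand phi m psi r r'\<bar> \<le> MJ * B * (\<Prod>i<m. normX h K (psi i))" if r': "r' \<in> K" for r'
    unfolding integrand_def abs_mult
    using MJ(1) MJ(2)[OF r r'] B abs_prod_le_prod_normX[OF compact_K psi minus_tau_in_delays[OF r r'] r']
    by (intro mult_mono) auto
  moreover have "\<forall>i<m. jointly_continuous h K (psi i)"
    using psi inX_jointly_continuous by blast
  ultimately have "\<bar>DG K J S tau m phi psi r\<bar> \<le> MJ * B * (\<Prod>i<m. normX h K (psi i)) * measure lebesgue K"
    unfolding DG_eq_integral by (intro abs_integral_le_measure[OF compact_K] integrable_integrand phi r)
  then show "\<bar>DG K J S tau m phi psi r\<bar> \<le> MJ * B * measure lebesgue K * (\<Prod>i<m. normX h K (psi i))"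
    by (simp add: mult_ac)
qed

lemma bounded_klinear_DG:
  assumes phi: "inX h K phi"
  shows "bounded_klinear h K m (DG K J S tau m phi)"
proof -
  have jc_phi: "jointly_continuous h K phi"
    using inX_jointly_continuous[OF phi] .
  obtain MJ where MJ: "0 \<le> MJ" "\<And>r r'. r \<in> K \<Longrightarrow> r' \<in> K \<Longrightarrow> \<bar>J r r'\<bar> \<le> MJ"
    using bounded_J by blast
  obtain B where B: "0 \<le> B" "\<And>x. \<bar>(deriv ^^ m) S x\<bar> \<le> B"
    using bounded_deriv_S by blast
  show ?thesis
    unfolding bounded_klinear_def inY_def
    using continuous_on_DG[OF jc_phi] DG_fun_upd_linear[OF jc_phi] supY_DG_le[OF MJ B jc_phi]
      inX_jointly_continuous
    by blast
qed

lemma abs_integrand_remainder_le: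
  assumes MJ: "0 \<le> MJ" "\<And>r r'. r \<in> K \<Longrightarrow> r' \<in> K \<Longrightarrow> \<bar>J r r'\<bar> \<le> MJ"
    and B: "0 \<le> B" "\<And>x. \<bar>(deriv ^^ Suc (Suc k)) S x\<bar> \<le> B"
    and eta: "inX h K eta" and psi: "\<forall>i<k. inX h K (psi i)" and r: "r \<in> K" and r': "r' \<in> K"
  shows "\<bar>integrand (\<lambda>t x. phi t x + eta t x) k psi r r' - integrand phi k psi r r'
            - integrand phi (Suc k) (case_nat eta psi) r r'\<bar>
         \<le> MJ * (B / 2 * (normX h K eta)\<^sup>2) * (\<Prod>i<k. normX h K (psi i))"
proof -
  define p where "p = phi (- tau r r') r'"
  define q where "q = eta (- tau r r') r'"
  define Q where "Q = (\<Prod>i<k. psi i (- tau r r') r')"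
  define T where "T = (deriv ^^ k) S (p + q) - (deriv ^^ k) S p - (deriv ^^ Suc k) S p * q"
  have "\<bar>q\<bar> \<le> normX h K eta"
    unfolding q_def using abs_le_normX[OF compact_K eta minus_tau_in_delays[OF r r'] r'] .
  then have "q\<^sup>2 \<le> (normX h K eta)\<^sup>2"
    by (metis abs_ge_zero power2_abs power_mono)
  have "\<bar>T\<bar> \<le> B / 2 * q\<^sup>2"
    unfolding T_def
    by (rule taylor_quadratic_remainder[where D = "\<lambda>m. (deriv ^^ m) S", OF has_real_derivative_deriv_S B(2)])
  also have "\<dots> \<le> B / 2 * (normX h K eta)\<^sup>2"
    using \<open>q\<^sup>2 \<le> (normX h K eta)\<^sup>2\<close> B(1) by (intro mult_left_mono) auto
  finally have T: "\<bar>T\<bar> \<le> B / 2 * (normX h K eta)\<^sup>2" .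
  have Q: "\<bar>Q\<bar> \<le> (\<Prod>i<k. normX h K (psi i))"
    unfolding Q_def using abs_prod_le_prod_normX[OF compact_K psi minus_tau_in_delays[OF r r'] r'] .
  have "integrand (\<lambda>t x. phi t x + eta t x) k psi r r' - integrand phi k psi r r'
          - integrand phi (Suc k) (case_nat eta psi) r r' = J r r' * T * Q"
    unfolding integrand_def p_def q_def Q_def T_def prod.lessThan_Suc_shift by (simp add: algebra_simps)
  also have "\<bar>\<dots>\<bar> \<le> MJ * (B / 2 * (normX h K eta)\<^sup>2) * (\<Prod>i<k. normX h K (psi i))"
    unfolding abs_mult using MJ(2)[OF r r'] T Q MJ(1) B(1)
    by (intro mult_mono) auto
  finally show ?thesis .
qed

lemma abs_DG_remainder_le:
  assumes MJ: "0 \<le> MJ" "\<And>r r'. r \<in> K \<Longrightarrow> r' \<in> K \<Longrightarrow> \<bar>J r r'\<bar> \<le> MJ"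
    and B: "0 \<le> B" "\<And>x. \<bar>(deriv ^^ Suc (Suc k)) S x\<bar> \<le> B"
    and phi: "inX h K phi" and eta: "inX h K eta" and psi: "\<forall>i<k. inX h K (psi i)" and r: "r \<in> K"
  shows "\<bar>DG K J S tau k (\<lambda>t x. phi t x + eta t x) psi r - DG K J S tau k phi psi r
            - DG K J S tau (Suc k) phi (case_nat eta psi) r\<bar>
         \<le> MJ * (B / 2 * (normX h K eta)\<^sup>2) * (\<Prod>i<k. normX h K (psi i)) * measure lebesgue K"
proof -
  note jc = inX_jointly_continuous
  have jc_case: "\<forall>i<Suc k. jointly_continuous h K (case_nat eta psi i)"
    using jc eta psi by (auto split: nat.split)
  have jc_psi: "\<forall>i<k. jointly_continuous h K (psi i)"
    using jc psi by blast
  have int1: "integrand (\<lambda>t x. phi t x + eta t x) k psi r integrable_on K"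
    using integrable_integrand[OF jointly_continuous_add[OF jc[OF phi] jc[OF eta]] jc_psi r] .
  have int2: "integrand phi k psi r integrable_on K"
    using integrable_integrand[OF jc[OF phi] jc_psi r] .
  have int3: "integrand phi (Suc k) (case_nat eta psi) r integrable_on K"
    using integrable_integrand[OF jc[OF phi] jc_case r] .
  have remainder_eq: "DG K J S tau k (\<lambda>t x. phi t x + eta t x) psi r - DG K J S tau k phi psi r
          - DG K J S tau (Suc k) phi (case_nat eta psi) r
        = integral K (\<lambda>r'. integrand (\<lambda>t x. phi t x + eta t x) k psi r r' - integrand phi k psi r r'
                              - integrand phi (Suc k) (case_nat eta psi) r r')"
    unfolding DG_eq_integral
    by (simp add: integral_diff[OF integrable_diff[OF int1 int2] int3] integral_diff[OF int1 int2])
  show ?thesis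
    unfolding remainder_eq
    by (rule abs_integral_le_measure[OF compact_K integrable_diff[OF integrable_diff[OF int1 int2] int3]
          abs_integrand_remainder_le[OF MJ B eta psi r]])
qed

lemma frechet_deriv_Lk_DG:
  assumes phi: "inX h K phi"
  shows "frechet_deriv_Lk h K k (DG K J S tau k)
           (\<lambda>eta psi. DG K J S tau (Suc k) phi (case_nat eta psi)) phi"
  unfolding frechet_deriv_Lk_def
proof (intro conjI allI impI)
  have "case_nat (psi 0) (\<lambda>i. psi (Suc i)) = psi" for psi :: "nat \<Rightarrow> real \<Rightarrow> 'a \<Rightarrow> real"
    by (rule ext) (simp split: nat.split)
  then show "bounded_klinear h K (Suc k) (\<lambda>psi. DG K J S tau (Suc k) phi (case_nat (psi 0) (\<lambda>i. psi (Suc i))))"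
    using bounded_klinear_DG[OF phi] by simp
next
  fix e :: real assume e: "0 < e"
  obtain MJ where MJ: "0 \<le> MJ" "\<And>r r'. r \<in> K \<Longrightarrow> r' \<in> K \<Longrightarrow> \<bar>J r r'\<bar> \<le> MJ"
    using bounded_J by blast
  obtain B where B: "0 \<le> B" "\<And>x. \<bar>(deriv ^^ Suc (Suc k)) S x\<bar> \<le> B"
    using bounded_deriv_S by blast
  define C where "C = MJ * B / 2 * measure lebesgue K"
  have C: "0 \<le> C" unfolding C_def using MJ B by simp
  show "\<exists>d>0. \<forall>eta. inX h K eta \<and> normX h K eta < d \<longrightarrow>
     (\<forall>psi. (\<forall>i<k. inX h K (psi i)) \<longrightarrow>
        supY K (\<lambda>r. DG K J S tau k (\<lambda>t x. phi t x + eta t x) psi r - DG K J S tau k phi psi r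
                     - DG K J S tau (Suc k) phi (case_nat eta psi) r)
        \<le> e * normX h K eta * (\<Prod>i<k. normX h K (psi i)))"
  proof (intro exI[of _ "e / (C + 1)"] conjI allI impI)
    fix eta psi assume eta: "inX h K eta \<and> normX h K eta < e / (C + 1)"
      and psi: "\<forall>i<k. inX h K (psi i)"
    define n where "n = normX h K eta"
    define P where "P = (\<Prod>i<k. normX h K (psi i))"
    have "0 \<le> n" "0 \<le> P"
      unfolding n_def P_def using eta psi normX_nonneg[OF compact_K K_nonempty h_nonneg]
      by (auto intro: prod_nonneg)
    moreover have "C * n \<le> e"
      using eta C \<open>0 \<le> n\<close> by (simp add: n_def pos_less_divide_eq algebra_simps)
    ultimately have "C * n\<^sup>2 * P \<le> e * n * P"
      by (simp add: power2_eq_square mult_right_mono mult.assoc[symmetric])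
    then show "supY K (\<lambda>r. DG K J S tau k (\<lambda>t x. phi t x + eta t x) psi r - DG K J S tau k phi psi r
                     - DG K J S tau (Suc k) phi (case_nat eta psi) r) \<le> e * n * P"
      using abs_DG_remainder_le[OF MJ B phi _ psi] eta
      by (intro supY_le[OF K_nonempty]) (force simp: C_def n_def P_def mult_ac)
  qed (use e C in simp)
qed

end

theorem proposition2p11:
  fixes \<Omega> :: "'a::euclidean_space set"
    and J tau :: "'a \<Rightarrow> 'a \<Rightarrow> real"
    and S :: "real \<Rightarrow> real"
    and h :: real
  assumes "\<Omega> \<noteq> {}" and "bounded \<Omega>" and "connected \<Omega>" and "open \<Omega>"
    and "continuous_on (closure \<Omega> \<times> closure \<Omega>) (\<lambda>(r, r'). J r r')"
    and "\<forall>k x. ((deriv ^^ k) S) differentiable (at x)"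
    and "\<forall>k. \<exists>B. \<forall>x. \<bar>(deriv ^^ k) S x\<bar> \<le> B"
    and "continuous_on (closure \<Omega> \<times> closure \<Omega>) (\<lambda>(r, r'). tau r r')"
    and "\<forall>r\<in>closure \<Omega>. \<forall>r'\<in>closure \<Omega>. 0 \<le> tau r r'"
    and "\<exists>r\<in>closure \<Omega>. \<exists>r'\<in>closure \<Omega>. tau r r' \<noteq> 0"
    and "h = Sup ((\<lambda>(r, r'). tau r r') ` (closure \<Omega> \<times> closure \<Omega>))"
  shows "\<forall>k phi. inX h (closure \<Omega>) phi \<longrightarrow>
           bounded_klinear h (closure \<Omega>) k (DG (closure \<Omega>) J S tau k phi) \<and>
           frechet_deriv_Lk h (closure \<Omega>) k (DG (closure \<Omega>) J S tau k)
             (\<lambda>eta psi. DG (closure \<Omega>) J S tau (Suc k) phi (case_nat eta psi)) phi"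
proof -
  let ?K = "closure \<Omega>"
  have K: "compact ?K" using assms(2) by (simp add: compact_closure)
  have "bdd_above ((\<lambda>(r, r'). tau r r') ` (?K \<times> ?K))"
    using K assms(8) by (intro bounded_imp_bdd_above compact_imp_bounded compact_continuous_image compact_Times)
  then have "\<forall>r\<in>?K. \<forall>r'\<in>?K. tau r r' \<le> h"
    unfolding assms(11) by (force intro: cSup_upper)
  then interpret delayed_integral_operator ?K J tau S h
    using K assms(1,5-9) by unfold_locales auto
  show ?thesis using bounded_klinear_DG frechet_deriv_Lk_DG by blast
qed

end
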